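(* Let $\mathfrak g$ be of type $A_n$. Then $(\mathcal B(\infty),\mathrm{wt},\varepsilon_i^\ast,\varphi_i^\ast,\widetilde e_i^\ast,\widetilde f_i^\ast)_{i\in I}$ is a highest weight $\mathfrak g$-crystal.
   Context: $I=\{1,\dots,n\}$, $\langle h_i,\alpha_j\rangle=2$ if $i=j$, $-1$ if $|i-j|=1$, $0$ otherwise. $\mathcal I=\{(s,t)\in\mathbb Z_{>0}\times I:s+t\le n+1\}$; $\mathcal B(\infty)$ is the set of $b=(b_{s,t})_{(s,t)\in\mathcal I}\in\mathbb Z_{\ge0}^{\mathcal I}$ with $b_{1,k}\ge b_{2,k-1}\ge\dots\ge b_{k,1}$ for $1\le k\le n$. Convention: $b_{s,t}=0$, $\mathbf e_{s,t}=0$ for $(s,t)\notin\mathcal I$ ($\mathbf e_{s,t}$ standard basis vectors). $\partial^\ast_{s,t}(b)=b_{s-1,t}-b_{s-1,t+1}-b_{s,t-1}+b_{s,t}$. For $i\in I$, $1\le k\le i$: $\Sigma^\ast_k(b)=\sum_{t=1}^k\partial^\ast_{t,i+1-t}(b)$; $\varepsilon_i^\ast(b)=\max_{1\le k\le i}\Sigma^\ast_k(b)$; $m_i^\ast(b)$, $M_i^\ast(b)$ the smallest, largest $k$ attaining the maximum. $\mathrm{wt}(b)=-\sum b_{s,t}\alpha_t$; $\varphi_i^\ast(b)=\varepsilon_i^\ast(b)+\langle h_i,\mathrm{wt}(b)\rangle$; $\widetilde f_i^\ast(b)=b+\sum_{t=1}^{m_i^\ast(b)}(\mathbf e_{t,i+1-t}-\mathbf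 e_{t-1,i+1-t})$; $\widetilde e_i^\ast(b)=b-\sum_{t=1}^{M_i^\ast(b)}(\mathbf e_{t,i+1-t}-\mathbf e_{t-1,i+1-t})$ if $\varepsilon_i^\ast(b)>0$, and $\widetilde e_i^\ast(b)=\mathbf 0$ (formal symbol) otherwise. A crystal is a set $B$ with $\mathrm{wt}:B\to P$, $\widetilde e_i,\widetilde f_i:B\to B\cup\{\mathbf 0\}$, $\varepsilon_i,\varphi_i:B\to\mathbb Z\cup\{-\infty\}$ such that $\varphi_i=\varepsilon_i+\langle h_i,\mathrm{wt}\rangle$; if $\widetilde e_ib\ne\mathbf0$ then $\mathrm{wt}(\widetilde e_ib)=\mathrm{wt}(b)+\alpha_i$, $\varepsilon_i(\widetilde e_ib)=\varepsilon_i(b)-1$, $\varphi_i(\widetilde e_ib)=\varphi_i(b)+1$; if $\widetilde f_ib\ne\mathbf0$ then $\mathrm{wt}(\widetilde f_ib)=\mathrm{wt}(b)-\alpha_i$, $\varepsilon_i(\widetilde f_ib)=\varepsilon_i(b)+1$, $\varphi_i(\widetilde f_ib)=\varphi_i(b)-1$; $\widetilde f_ib=b'$ iff $b=\widetilde e_ib'$; $\varepsilon_i(b)=-\infty$ implies $\widetilde e_ib=\widetilde f_ib=\mathbf0$. It is a highest weight crystal if there is $b_0\in B$ reachable from every $b$ by a sequence of $\widetilde e_i$'s and $\varepsilon_i(b)=\max\{m\ge0:\widetilde e_i^m b\ne\mathbf 0\}$ for all $b,i$. *)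

theory Defs
  imports "HOL-Library.Extended_Real"
begin

text \<open>Weights lambda in P are represented by the integer vector
  i |-> <h_i, lambda> (i in I), extended by 0 outside I; for type A_n this is an
  isomorphism of P with Z^I (coordinates w.r.t. fundamental weights).\<close>

type_synonym weight = "nat \<Rightarrow> int"

definition cartanA :: "nat \<Rightarrow> nat \<Rightarrow> int" where
  "cartanA i j = (if i = j then 2 else if i = j + 1 \<or> j = i + 1 then -1 else 0)"

definition simple_root :: "nat \<Rightarrow> nat \<Rightarrow> weight" where
  "simple_root n j = (\<lambda>i. if i \<in> {1..n} then cartanA i j else 0)"

section \<open>Abstract crystals (None plays the role of the formal symbol 0)\<close>

definition crystal ::
  "nat \<Rightarrow> 'b set \<Rightarrow> ('b \<Rightarrow> weight) \<Rightarrow> (nat \<Rightarrow> 'b \<Rightarrow> 'b option) \<Rightarrow> (nat \<Rightarrow> 'b \<Rightarrow> 'b option)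
    \<Rightarrow> (nat \<Rightarrow> 'b \<Rightarrow> ereal) \<Rightarrow> (nat \<Rightarrow> 'b \<Rightarrow> ereal) \<Rightarrow> bool" where
  "crystal n B wt e f eps phi \<longleftrightarrow>
     (\<forall>b\<in>B. (\<forall>j. j \<notin> {1..n} \<longrightarrow> wt b j = 0)) \<and>
     (\<forall>i\<in>{1..n}. \<forall>b\<in>B.
        (e i b = None \<or> the (e i b) \<in> B) \<and>
        (f i b = None \<or> the (f i b) \<in> B) \<and>
        (eps i b \<noteq> \<infinity> \<and> phi i b \<noteq> \<infinity>) \<and>
        phi i b = eps i b + ereal (of_int (wt b i)) \<and>
        (\<forall>b'. e i b = Some b' \<longrightarrow>
            wt b' = (\<lambda>j. wt b j + simple_root n i j) \<and>
            eps i b' = eps i b - 1 \<and> phi i b' = phi i b + 1) \<and>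
        (\<forall>b'. f i b = Some b' \<longrightarrow>
            wt b' = (\<lambda>j. wt b j - simple_root n i j) \<and>
            eps i b' = eps i b + 1 \<and> phi i b' = phi i b - 1) \<and>
        (\<forall>b'\<in>B. f i b = Some b' \<longleftrightarrow> e i b' = Some b) \<and>
        (eps i b = -\<infinity> \<longrightarrow> e i b = None \<and> f i b = None))"

fun apply_ops :: "(nat \<Rightarrow> 'b \<Rightarrow> 'b option) \<Rightarrow> nat list \<Rightarrow> 'b \<Rightarrow> 'b option" where
  "apply_ops e [] b = Some b"
| "apply_ops e (i # is) b = Option.bind (e i b) (apply_ops e is)"

definition highest_weight_crystal ::
  "nat \<Rightarrow> 'b set \<Rightarrow> ('b \<Rightarrow> weight) \<Rightarrow> (nat \<Rightarrow> 'b \<Rightarrow> 'b option) \<Rightarrow> (nat \<Rightarrow> 'b \<Rightarrow> 'b option)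
    \<Rightarrow> (nat \<Rightarrow> 'b \<Rightarrow> ereal) \<Rightarrow> (nat \<Rightarrow> 'b \<Rightarrow> ereal) \<Rightarrow> bool" where
  "highest_weight_crystal n B wt e f eps phi \<longleftrightarrow>
     crystal n B wt e f eps phi \<and>
     (\<exists>b0\<in>B. \<forall>b\<in>B. \<exists>is. set is \<subseteq> {1..n} \<and> apply_ops e is b = Some b0) \<and>
     (\<forall>b\<in>B. \<forall>i\<in>{1..n}. \<exists>m::nat.
        apply_ops e (replicate m i) b \<noteq> None \<and>
        (\<forall>k. apply_ops e (replicate k i) b \<noteq> None \<longrightarrow> k \<le> m) \<and>
        eps i b = ereal (of_nat m))"

text \<open>Elements b = (b_{s,t}) are functions nat => nat => int, b s t = b_{s,t},
  required to vanish outside the index set \<I> (the convention b_{s,t} = 0).\<close>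

definition Iset :: "nat \<Rightarrow> (nat \<times> nat) set" where
  "Iset n = {(s, t). 1 \<le> s \<and> 1 \<le> t \<and> t \<le> n \<and> s + t \<le> n + 1}"

definition Binf :: "nat \<Rightarrow> (nat \<Rightarrow> nat \<Rightarrow> int) set" where
  "Binf n = {b. (\<forall>s t. (s, t) \<notin> Iset n \<longrightarrow> b s t = 0) \<and>
                (\<forall>s t. (s, t) \<in> Iset n \<longrightarrow> b s t \<ge> 0) \<and>
                (\<forall>k s. 1 \<le> k \<and> k \<le> n \<and> 1 \<le> s \<and> s < k \<longrightarrow>
                       b s (k + 1 - s) \<ge> b (s + 1) (k - s))}"

definition evec :: "nat \<Rightarrow> nat \<Rightarrow> nat \<Rightarrow> nat \<Rightarrow> nat \<Rightarrow> int" where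
  "evec n s t = (\<lambda>x y. if (x, y) = (s, t) \<and> (s, t) \<in> Iset n then 1 else 0)"

text \<open>b_{s,t} with the convention that it is 0 outside \<I> (also for index 0).\<close>
definition bval :: "nat \<Rightarrow> (nat \<Rightarrow> nat \<Rightarrow> int) \<Rightarrow> int \<Rightarrow> int \<Rightarrow> int" where
  "bval n b s t = (if s \<ge> 1 \<and> t \<ge> 1 \<and> (nat s, nat t) \<in> Iset n then b (nat s) (nat t) else 0)"

definition dstar :: "nat \<Rightarrow> (nat \<Rightarrow> nat \<Rightarrow> int) \<Rightarrow> int \<Rightarrow> int \<Rightarrow> int" where
  "dstar n b s t = bval n b (s - 1) t - bval n b (s - 1) (t + 1) - bval n b s (t - 1) + bval n b s t"

definition Sigstar :: "nat \<Rightarrow> nat \<Rightarrow> (nat \<Rightarrow> nat \<Rightarrow> int) \<Rightarrow> nat \<Rightarrow> int" where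
  "Sigstar n i b k = (\<Sum>t = 1..k. dstar n b (int t) (int i + 1 - int t))"

definition epsstar :: "nat \<Rightarrow> nat \<Rightarrow> (nat \<Rightarrow> nat \<Rightarrow> int) \<Rightarrow> int" where
  "epsstar n i b = Max (Sigstar n i b ` {1..i})"

definition mstar :: "nat \<Rightarrow> nat \<Rightarrow> (nat \<Rightarrow> nat \<Rightarrow> int) \<Rightarrow> nat" where
  "mstar n i b = (LEAST k. k \<in> {1..i} \<and> Sigstar n i b k = epsstar n i b)"

definition Mstar :: "nat \<Rightarrow> nat \<Rightarrow> (nat \<Rightarrow> nat \<Rightarrow> int) \<Rightarrow> nat" where
  "Mstar n i b = (GREATEST k. k \<in> {1..i} \<and> Sigstar n i b k = epsstar n i b)"

definition wtB :: "nat \<Rightarrow> (nat \<Rightarrow> nat \<Rightarrow> int) \<Rightarrow> weight" where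
  "wtB n b = (\<lambda>i. if i \<in> {1..n}
                  then - (\<Sum>(s, t)\<in>Iset n. b s t * cartanA i t) else 0)"

definition phistar :: "nat \<Rightarrow> nat \<Rightarrow> (nat \<Rightarrow> nat \<Rightarrow> int) \<Rightarrow> int" where
  "phistar n i b = epsstar n i b + wtB n b i"

definition stringvec :: "nat \<Rightarrow> nat \<Rightarrow> nat \<Rightarrow> nat \<Rightarrow> nat \<Rightarrow> int" where
  "stringvec n i m = (\<lambda>x y. \<Sum>t = 1..m. evec n t (i + 1 - t) x y - evec n (t - 1) (i + 1 - t) x y)"

definition fstar :: "nat \<Rightarrow> nat \<Rightarrow> (nat \<Rightarrow> nat \<Rightarrow> int) \<Rightarrow> (nat \<Rightarrow> nat \<Rightarrow> int) option" where
  "fstar n i b = Some (\<lambda>x y. b x y + stringvec n i (mstar n i b) x y)"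

definition estar :: "nat \<Rightarrow> nat \<Rightarrow> (nat \<Rightarrow> nat \<Rightarrow> int) \<Rightarrow> (nat \<Rightarrow> nat \<Rightarrow> int) option" where
  "estar n i b = (if epsstar n i b > 0
                  then Some (\<lambda>x y. b x y - stringvec n i (Mstar n i b) x y) else None)"

end

theory Submission
  imports Defs
begin

text \<open>
  On elements vanishing outside the index set, the partial sums telescope:
  Sigma*_k(b) = b_{k,i+1-k} - b_{k,i-k}. Adding the string vector of length m = m*_i(b)
  therefore raises Sigma*_k by 2 for k < m, by 1 for k = m and leaves it unchanged for k > m,
  so eps*_i grows by one and the largest maximiser of the new sequence is m; symmetrically
  for e*_i with M*_i. This makes e*_i and f*_i mutually inverse, and the strict inequalities
  between Sigma*_m and its neighbours are exactly what keeps the modified element inside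
  B(infinity). If b is nonzero, so is its top row (entries decrease along antidiagonals), and
  its first nonzero entry b_{1,i} gives eps*_i(b) > 0; moreover e*_i lowers the sum of all
  entries by one, so every element reaches 0.
\<close>

definition vanishes_off_Iset :: "nat \<Rightarrow> (nat \<Rightarrow> nat \<Rightarrow> int) \<Rightarrow> bool" where
  "vanishes_off_Iset n b \<longleftrightarrow> (\<forall>s t. (s, t) \<notin> Iset n \<longrightarrow> b s t = 0)"

lemma finite_Iset: "finite (Iset n)"
proof -
  have "Iset n \<subseteq> {0..n+1} \<times> {0..n}" by (auto simp: Iset_def)
  then show ?thesis by (rule finite_subset) simp
qed

lemma Binf_vanishes_off_Iset: "b \<in> Binf n \<Longrightarrow> vanishes_off_Iset n b"
  by (simp add: Binf_def vanishes_off_Iset_def)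

lemma Binf_nonneg: "b \<in> Binf n \<Longrightarrow> 0 \<le> b s t"
  unfolding Binf_def by (cases "(s, t) \<in> Iset n") auto

lemma Binf_step_le:
  assumes b: "b \<in> Binf n" and s: "1 \<le> s"
  shows "b (s + 1) t \<le> b s (t + 1)"
proof (cases "(s + 1, t) \<in> Iset n")
  case True
  then have "1 \<le> s + t \<and> s + t \<le> n \<and> 1 \<le> s \<and> s < s + t" using s by (auto simp: Iset_def)
  then have "b (s + 1) (s + t - s) \<le> b s (s + t + 1 - s)"
    using b unfolding Binf_def by blast
  then show ?thesis by simp
next
  case False
  then show ?thesis using b Binf_nonneg[OF b] by (simp add: Binf_def)
qed

lemma Binf_diagonal_mono:
  assumes "b \<in> Binf n" "1 \<le> s"
  shows "b (s + d) t \<le> b s (t + d)"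
proof (induction d arbitrary: t)
  case (Suc d)
  have "b (s + d + 1) t \<le> b (s + d) (t + 1)" using Binf_step_le assms by simp
  also have "\<dots> \<le> b s (t + Suc d)" using Suc.IH[of "t + 1"] by simp
  finally show ?case by simp
qed simp

lemma BinfI:
  assumes "vanishes_off_Iset n b" "\<And>s t. 0 \<le> b s t"
    and "\<And>s t. 1 \<le> s \<Longrightarrow> b (s + 1) t \<le> b s (t + 1)"
  shows "b \<in> Binf n"
  unfolding Binf_def mem_Collect_eq
proof (intro conjI allI impI)
  fix k s :: nat assume "1 \<le> k \<and> k \<le> n \<and> 1 \<le> s \<and> s < k"
  then show "b (s + 1) (k - s) \<le> b s (k + 1 - s)"
    using assms(3)[of s "k - s"] by (simp add: Suc_diff_le)
qed (use assms in \<open>auto simp: vanishes_off_Iset_def\<close>)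

lemma zero_in_Binf: "(\<lambda>s t. 0) \<in> Binf n"
  by (simp add: Binf_def)

lemma Sigstar_telescope:
  assumes "vanishes_off_Iset n b" "k \<le> i"
  shows "Sigstar n i b k = b k (i + 1 - k) - b k (i - k)"
  using assms(2)
proof (induction k)
  case 0
  have "b 0 (i + 1) = 0" "b 0 i = 0" using assms(1) by (auto simp: vanishes_off_Iset_def Iset_def)
  then show ?case by (simp add: Sigstar_def)
next
  case (Suc k)
  then obtain j where j: "i = Suc k + j" by (metis le_Suc_ex)
  have bval: "bval n b (int x) (int y) = b x y" for x y
    using assms(1) by (auto simp: bval_def vanishes_off_Iset_def Iset_def)
  have "dstar n b (int (Suc k)) (int i + 1 - int (Suc k))
        = b k (j + 1) - b k (j + 2) - b (Suc k) j + b (Suc k) (j + 1)"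
    using bval[of k "j + 1"] bval[of k "j + 2"] bval[of "Suc k" j] bval[of "Suc k" "j + 1"]
    by (simp add: dstar_def j algebra_simps)
  then show ?case using Suc j by (simp add: Sigstar_def)
qed

lemma stringvec_Suc:
  "stringvec n i (Suc m) x y = stringvec n i m x y + evec n (Suc m) (i - m) x y - evec n m (i - m) x y"
  by (simp add: stringvec_def)

lemma stringvec_eq:
  assumes "i \<le> n" "m \<le> i"
  shows "stringvec n i m x y = (if 1 \<le> x \<and> x \<le> m \<and> x + y = i + 1 then 1 else 0)
                             - (if 1 \<le> x \<and> x < m \<and> x + y = i then 1 else 0)"
  using assms(2)
proof (induction m)
  case 0
  then show ?case by (simp add: stringvec_def)
next
  case (Suc m)
  then show ?case using assms(1) unfolding stringvec_Suc by (auto simp: evec_def Iset_def)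
qed

lemma vanishes_off_Iset_stringvec:
  assumes "vanishes_off_Iset n b" "i \<le> n" "m \<le> i"
  shows "vanishes_off_Iset n (\<lambda>x y. b x y + stringvec n i m x y)"
    and "vanishes_off_Iset n (\<lambda>x y. b x y - stringvec n i m x y)"
  using assms by (auto simp: vanishes_off_Iset_def stringvec_eq Iset_def)

lemma sum_Iset_evec:
  "(\<Sum>(x, y)\<in>Iset n. evec n s t x y * g y) = (if (s, t) \<in> Iset n then g t else 0)"
proof -
  have "(\<lambda>(x, y). evec n s t x y * g y) = (\<lambda>p. if p = (s, t) then if (s, t) \<in> Iset n then g t else 0 else 0)"
    by (auto simp: evec_def fun_eq_iff)
  then show ?thesis by (simp add: finite_Iset)
qed

lemma sum_Iset_stringvec:
  assumes "1 \<le> m" "m \<le> i" "i \<le> n"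
  shows "(\<Sum>(x, y)\<in>Iset n. stringvec n i m x y * g y) = g i"
  using assms(1,2)
proof (induction m rule: dec_induct)
  case base
  have "(\<lambda>(x, y). stringvec n i 1 x y * g y) = (\<lambda>(x, y). evec n 1 i x y * g y)"
    by (auto simp: stringvec_def evec_def Iset_def fun_eq_iff)
  moreover have "(1, i) \<in> Iset n" using assms by (auto simp: Iset_def)
  ultimately show ?case by (simp add: sum_Iset_evec)
next
  case (step m)
  have "(\<Sum>(x, y)\<in>Iset n. stringvec n i (Suc m) x y * g y)
        = (\<Sum>(x, y)\<in>Iset n. stringvec n i m x y * g y)
          + (\<Sum>(x, y)\<in>Iset n. evec n (Suc m) (i - m) x y * g y)
          - (\<Sum>(x, y)\<in>Iset n. evec n m (i - m) x y * g y)"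
    unfolding stringvec_Suc by (simp add: split_def algebra_simps sum.distrib sum_subtractf)
  moreover have "(Suc m, i - m) \<in> Iset n" "(m, i - m) \<in> Iset n"
    using step assms(2,3) by (auto simp: Iset_def)
  ultimately show ?case using step by (simp add: sum_Iset_evec)
qed

lemma Sigstar_stringvec:
  assumes "vanishes_off_Iset n b" "i \<le> n" "m \<le> i" "k \<in> {1..i}"
  shows "Sigstar n i (\<lambda>x y. b x y + stringvec n i m x y) k
           = Sigstar n i b k + (if k \<le> m then 1 else 0) + (if k < m then 1 else 0)"
    and "Sigstar n i (\<lambda>x y. b x y - stringvec n i m x y) k
           = Sigstar n i b k - (if k \<le> m then 1 else 0) - (if k < m then 1 else 0)"
  using assms vanishes_off_Iset_stringvec[OF assms(1-3)]
  by (auto simp: Sigstar_telescope stringvec_eq)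

lemma wtB_stringvec:
  assumes "1 \<le> m" "m \<le> i" "i \<le> n"
  shows "wtB n (\<lambda>x y. b x y + stringvec n i m x y) = (\<lambda>j. wtB n b j - simple_root n i j)"
    and "wtB n (\<lambda>x y. b x y - stringvec n i m x y) = (\<lambda>j. wtB n b j + simple_root n i j)"
  using sum_Iset_stringvec[OF assms, of "cartanA _"]
  by (auto simp: wtB_def simple_root_def fun_eq_iff split_def algebra_simps sum.distrib sum_subtractf)

lemma Sigstar_le_epsstar: "k \<in> {1..i} \<Longrightarrow> Sigstar n i b k \<le> epsstar n i b"
  unfolding epsstar_def by simp

lemma epsstar_attained: "1 \<le> i \<Longrightarrow> \<exists>k\<in>{1..i}. Sigstar n i b k = epsstar n i b"
proof -
  assume "1 \<le> i"
  then have "epsstar n i b \<in> Sigstar n i b ` {1..i}" unfolding epsstar_def by (intro Max_in) auto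
  then show ?thesis by auto
qed

lemma mstar_argmax:
  assumes "1 \<le> i"
  shows "mstar n i b \<in> {1..i}" "Sigstar n i b (mstar n i b) = epsstar n i b"
    and "\<And>k. k \<in> {1..i} \<Longrightarrow> k < mstar n i b \<Longrightarrow> Sigstar n i b k < epsstar n i b"
proof -
  let ?P = "\<lambda>k. k \<in> {1..i} \<and> Sigstar n i b k = epsstar n i b"
  obtain k0 where "?P k0" using epsstar_attained[OF assms] by blast
  then have "?P (mstar n i b)" unfolding mstar_def by (rule LeastI)
  then show "mstar n i b \<in> {1..i}" "Sigstar n i b (mstar n i b) = epsstar n i b" by auto
  fix k assume "k \<in> {1..i}" "k < mstar n i b"
  then show "Sigstar n i b k < epsstar n i b"
    using not_less_Least[of k ?P] Sigstar_le_epsstar[of k i n b] unfolding mstar_def by fastforce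
qed

lemma Mstar_argmax:
  assumes "1 \<le> i"
  shows "Mstar n i b \<in> {1..i}" "Sigstar n i b (Mstar n i b) = epsstar n i b"
    and "\<And>k. k \<in> {1..i} \<Longrightarrow> Mstar n i b < k \<Longrightarrow> Sigstar n i b k < epsstar n i b"
proof -
  let ?P = "\<lambda>k. k \<in> {1..i} \<and> Sigstar n i b k = epsstar n i b"
  have bound: "\<And>k. ?P k \<Longrightarrow> k \<le> i" by simp
  obtain k0 where "?P k0" using epsstar_attained[OF assms] by blast
  then have "?P (Mstar n i b)" unfolding Mstar_def by (rule GreatestI_nat[OF _ bound])
  then show "Mstar n i b \<in> {1..i}" "Sigstar n i b (Mstar n i b) = epsstar n i b" by auto
  fix k assume "k \<in> {1..i}" "Mstar n i b < k"
  then show "Sigstar n i b k < epsstar n i b"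
    using Greatest_le_nat[of ?P k, OF _ bound] Sigstar_le_epsstar[of k i n b]
    unfolding Mstar_def by fastforce
qed

lemma epsstar_eqI:
  assumes "k0 \<in> {1..i}" "Sigstar n i b k0 = E" "\<And>k. k \<in> {1..i} \<Longrightarrow> Sigstar n i b k \<le> E"
  shows "epsstar n i b = E"
  unfolding epsstar_def using assms by (intro Max_eqI) auto

lemma mstar_eqI:
  assumes "epsstar n i b = E" "k0 \<in> {1..i}" "Sigstar n i b k0 = E"
    and "\<And>k. k \<in> {1..i} \<Longrightarrow> k < k0 \<Longrightarrow> Sigstar n i b k < E"
  shows "mstar n i b = k0"
  unfolding mstar_def using assms by (intro Least_equality) force+

lemma Mstar_eqI:
  assumes "epsstar n i b = E" "k0 \<in> {1..i}" "Sigstar n i b k0 = E"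
    and "\<And>k. k \<in> {1..i} \<Longrightarrow> k0 < k \<Longrightarrow> Sigstar n i b k < E"
  shows "Mstar n i b = k0"
  unfolding Mstar_def using assms by (intro Greatest_equality) force+

lemma epsstar_Mstar_raise:
  assumes i: "1 \<le> i"
    and S: "\<And>k. k \<in> {1..i} \<Longrightarrow> Sigstar n i b' k
              = Sigstar n i b k + (if k \<le> mstar n i b then 1 else 0) + (if k < mstar n i b then 1 else 0)"
  shows "epsstar n i b' = epsstar n i b + 1" "Mstar n i b' = mstar n i b"
proof -
  note m = mstar_argmax[OF i, where n = n and b = b]
  have le: "Sigstar n i b k \<le> epsstar n i b" if "k \<in> {1..i}" for k
    using Sigstar_le_epsstar that .
  have at_m: "Sigstar n i b' (mstar n i b) = epsstar n i b + 1" using S[OF m(1)] m(2) by simp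
  have "Sigstar n i b' k \<le> epsstar n i b + 1" if k: "k \<in> {1..i}" for k
    using S[OF k] le[OF k] m(3)[OF k] by (cases "k < mstar n i b") auto
  then show eps: "epsstar n i b' = epsstar n i b + 1" by (rule epsstar_eqI[OF m(1) at_m])
  have "Sigstar n i b' k < epsstar n i b + 1" if k: "k \<in> {1..i}" "mstar n i b < k" for k
    using S[OF k(1)] le[OF k(1)] k(2) by simp
  then show "Mstar n i b' = mstar n i b" by (rule Mstar_eqI[OF eps m(1) at_m])
qed

lemma epsstar_mstar_lower:
  assumes i: "1 \<le> i"
    and S: "\<And>k. k \<in> {1..i} \<Longrightarrow> Sigstar n i b' k
              = Sigstar n i b k - (if k \<le> Mstar n i b then 1 else 0) - (if k < Mstar n i b then 1 else 0)"
  shows "epsstar n i b' = epsstar n i b - 1" "mstar n i b' = Mstar n i b"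
proof -
  note M = Mstar_argmax[OF i, where n = n and b = b]
  have le: "Sigstar n i b k \<le> epsstar n i b" if "k \<in> {1..i}" for k
    using Sigstar_le_epsstar that .
  have at_M: "Sigstar n i b' (Mstar n i b) = epsstar n i b - 1" using S[OF M(1)] M(2) by simp
  have "Sigstar n i b' k \<le> epsstar n i b - 1" if k: "k \<in> {1..i}" for k
    using S[OF k] le[OF k] M(3)[OF k] by (cases "Mstar n i b < k") auto
  then show eps: "epsstar n i b' = epsstar n i b - 1" by (rule epsstar_eqI[OF M(1) at_M])
  have "Sigstar n i b' k < epsstar n i b - 1" if k: "k \<in> {1..i}" "k < Mstar n i b" for k
    using S[OF k(1)] le[OF k(1)] k(2) by simp
  then show "mstar n i b' = Mstar n i b" by (rule mstar_eqI[OF eps M(1) at_M])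
qed

lemma Binf_raise:
  assumes b: "b \<in> Binf n" and m: "1 \<le> m" "m \<le> i" "i \<le> n"
    and gap: "1 < m \<Longrightarrow> b m (i - m) < b (m - 1) (i + 1 - m)"
  shows "(\<lambda>x y. b x y + stringvec n i m x y) \<in> Binf n"
proof (rule BinfI)
  show "vanishes_off_Iset n (\<lambda>x y. b x y + stringvec n i m x y)"
    using vanishes_off_Iset_stringvec(1)[OF Binf_vanishes_off_Iset[OF b]] m by simp
  have pos: "1 \<le> b s t" if s: "1 \<le> s" "s < m" "s + t = i" for s t
  proof -
    have "b (s + (m - 1 - s)) (i + 1 - m) \<le> b s (i + 1 - m + (m - 1 - s))"
      using Binf_diagonal_mono[OF b s(1)] .
    moreover have "t = i - s" using s by simp
    ultimately have "b (m - 1) (i + 1 - m) \<le> b s t" using s m by simp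
    then show ?thesis using gap Binf_nonneg[OF b, of m "i - m"] s by simp
  qed
  fix s t
  show "0 \<le> b s t + stringvec n i m s t"
    using pos[of s t] Binf_nonneg[OF b, of s t] m by (auto simp: stringvec_eq)
  assume s: "1 \<le> s"
  show "b (s + 1) t + stringvec n i m (s + 1) t \<le> b s (t + 1) + stringvec n i m s (t + 1)"
    using Binf_step_le[OF b s, of t] gap s m by (auto simp: stringvec_eq)
qed

lemma Binf_lower:
  assumes b: "b \<in> Binf n" and M: "1 \<le> M" "M \<le> i" "i \<le> n"
    and gap: "b (M + 1) (i - M) < b M (i + 1 - M)"
  shows "(\<lambda>x y. b x y - stringvec n i M x y) \<in> Binf n"
proof (rule BinfI)
  show "vanishes_off_Iset n (\<lambda>x y. b x y - stringvec n i M x y)"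
    using vanishes_off_Iset_stringvec(2)[OF Binf_vanishes_off_Iset[OF b]] M by simp
  have pos: "1 \<le> b s t" if s: "1 \<le> s" "s \<le> M" "s + t = i + 1" for s t
  proof -
    have "b (s + (M - s)) (i + 1 - M) \<le> b s (i + 1 - M + (M - s))"
      using Binf_diagonal_mono[OF b s(1)] .
    moreover have "t = i + 1 - s" using s by simp
    ultimately have "b M (i + 1 - M) \<le> b s t" using s M by simp
    then show ?thesis using gap Binf_nonneg[OF b, of "M + 1" "i - M"] by simp
  qed
  fix s t
  show "0 \<le> b s t - stringvec n i M s t"
    using pos[of s t] Binf_nonneg[OF b, of s t] M by (auto simp: stringvec_eq)
  assume s: "1 \<le> s"
  show "b (s + 1) t - stringvec n i M (s + 1) t \<le> b s (t + 1) - stringvec n i M s (t + 1)"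
  proof (cases "s = M \<and> t = i - M")
    case True
    then show ?thesis using gap M by (auto simp: stringvec_eq Suc_diff_le)
  next
    case False
    then show ?thesis using Binf_step_le[OF b s, of t] s M by (auto simp: stringvec_eq)
  qed
qed

lemma epsstar_nonneg:
  assumes b: "b \<in> Binf n" and i: "1 \<le> i"
  shows "0 \<le> epsstar n i b"
proof -
  have "b i 0 = 0" using b by (simp add: Binf_def Iset_def)
  then have "Sigstar n i b i = b i 1"
    using Sigstar_telescope[OF Binf_vanishes_off_Iset[OF b], of i i] by simp
  moreover have "Sigstar n i b i \<le> epsstar n i b" using i by (simp add: Sigstar_le_epsstar)
  ultimately show ?thesis using Binf_nonneg[OF b, of i 1] by simp
qed

lemma mstar_gap:
  assumes b: "b \<in> Binf n" and i: "1 \<le> i" and m: "1 < mstar n i b"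
  shows "b (mstar n i b) (i - mstar n i b) < b (mstar n i b - 1) (i + 1 - mstar n i b)"
proof -
  define m where "m = mstar n i b"
  note argmax = mstar_argmax[OF i, where n = n and b = b, folded m_def]
  have m: "1 < m" "m \<le> i" using m argmax(1) by (auto simp: m_def)
  have "Sigstar n i b (m - 1) < Sigstar n i b m"
    using argmax m by simp
  moreover have "b (m - 1 + 1) (i + 1 - m) \<le> b (m - 1) (i + 1 - m + 1)"
    by (rule Binf_step_le[OF b]) (use m in simp)
  moreover have "m - 1 + 1 = m" "i + 1 - m + 1 = i + 1 - (m - 1)" "i - (m - 1) = i + 1 - m"
    using m by auto
  ultimately show ?thesis
    using Sigstar_telescope[OF Binf_vanishes_off_Iset[OF b], of "m - 1" i]
      Sigstar_telescope[OF Binf_vanishes_off_Iset[OF b], of m i] m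
    unfolding m_def[symmetric] by simp
qed

lemma Mstar_gap:
  assumes b: "b \<in> Binf n" and i: "1 \<le> i" and pos: "0 < epsstar n i b"
  shows "b (Mstar n i b + 1) (i - Mstar n i b) < b (Mstar n i b) (i + 1 - Mstar n i b)"
proof -
  define M where "M = Mstar n i b"
  note argmax = Mstar_argmax[OF i, where n = n and b = b, folded M_def]
  note telescope = Sigstar_telescope[OF Binf_vanishes_off_Iset[OF b]]
  show ?thesis
  proof (cases "M < i")
    case True
    have "Sigstar n i b (M + 1) < Sigstar n i b M"
      using argmax True by simp
    moreover have "b (M + 1) (i - (M + 1)) \<le> b M (i - (M + 1) + 1)"
      using Binf_step_le[OF b] argmax(1) by simp
    moreover have "i - (M + 1) + 1 = i - M" "i + 1 - (M + 1) = i - M"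
      using True by auto
    ultimately show ?thesis
      using telescope[of "M + 1" i] telescope[of M i] True unfolding M_def[symmetric] by simp
  next
    case False
    then have "M = i" using argmax(1) by simp
    moreover have "b (i + 1) 0 = 0" "b i 0 = 0" using b by (auto simp: Binf_def Iset_def)
    ultimately show ?thesis
      using telescope[of i i] argmax(2) pos unfolding M_def[symmetric] by simp
  qed
qed

lemma fstar_SomeD:
  assumes b: "b \<in> Binf n" and i: "1 \<le> i" "i \<le> n" and f: "fstar n i b = Some b'"
  shows "b' \<in> Binf n" "epsstar n i b' = epsstar n i b + 1" "Mstar n i b' = mstar n i b"
    and "wtB n b' = (\<lambda>j. wtB n b j - simple_root n i j)"
proof -
  note m = mstar_argmax[OF i(1), where n = n and b = b]
  have b': "b' = (\<lambda>x y. b x y + stringvec n i (mstar n i b) x y)"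
    using f by (simp add: fstar_def)
  show "b' \<in> Binf n"
    unfolding b' using Binf_raise[OF b _ _ i(2)] mstar_gap[OF b i(1)] m(1) by simp
  have "Sigstar n i b' k = Sigstar n i b k + (if k \<le> mstar n i b then 1 else 0)
                                          + (if k < mstar n i b then 1 else 0)" if "k \<in> {1..i}" for k
    unfolding b' using Sigstar_stringvec(1)[OF Binf_vanishes_off_Iset[OF b] i(2) _ that] m(1) by simp
  then show "epsstar n i b' = epsstar n i b + 1" "Mstar n i b' = mstar n i b"
    using epsstar_Mstar_raise[OF i(1)] by blast+
  show "wtB n b' = (\<lambda>j. wtB n b j - simple_root n i j)"
    unfolding b' using wtB_stringvec(1)[OF _ _ i(2)] m(1) by simp
qed

lemma estar_SomeD:
  assumes b: "b \<in> Binf n" and i: "1 \<le> i" "i \<le> n" and e: "estar n i b = Some b'"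
  shows "0 < epsstar n i b" "b' \<in> Binf n" "epsstar n i b' = epsstar n i b - 1"
    and "mstar n i b' = Mstar n i b" "wtB n b' = (\<lambda>j. wtB n b j + simple_root n i j)"
    and "(\<Sum>(s, t)\<in>Iset n. b' s t) = (\<Sum>(s, t)\<in>Iset n. b s t) - 1"
proof -
  note M = Mstar_argmax[OF i(1), where n = n and b = b]
  show pos: "0 < epsstar n i b"
    using e by (simp add: estar_def split: if_splits)
  have b': "b' = (\<lambda>x y. b x y - stringvec n i (Mstar n i b) x y)"
    using e pos by (simp add: estar_def)
  show "b' \<in> Binf n"
    unfolding b' using Binf_lower[OF b _ _ i(2) Mstar_gap[OF b i(1) pos]] M(1) by simp
  have "Sigstar n i b' k = Sigstar n i b k - (if k \<le> Mstar n i b then 1 else 0)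
                                          - (if k < Mstar n i b then 1 else 0)" if "k \<in> {1..i}" for k
    unfolding b' using Sigstar_stringvec(2)[OF Binf_vanishes_off_Iset[OF b] i(2) _ that] M(1) by simp
  then show "epsstar n i b' = epsstar n i b - 1" "mstar n i b' = Mstar n i b"
    using epsstar_mstar_lower[OF i(1)] by blast+
  show "wtB n b' = (\<lambda>j. wtB n b j + simple_root n i j)"
    unfolding b' using wtB_stringvec(2)[OF _ _ i(2)] M(1) by simp
  show "(\<Sum>(s, t)\<in>Iset n. b' s t) = (\<Sum>(s, t)\<in>Iset n. b s t) - 1"
    unfolding b' using sum_Iset_stringvec[OF _ _ i(2), of _ "\<lambda>_. 1"] M(1)
    by (simp add: split_def sum_subtractf)
qed

lemma estar_fstar:
  assumes b: "b \<in> Binf n" and i: "1 \<le> i" "i \<le> n" and f: "fstar n i b = Some b'"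
  shows "estar n i b' = Some b"
proof -
  have "0 < epsstar n i b'"
    using fstar_SomeD(2)[OF b i f] epsstar_nonneg[OF b i(1)] by simp
  then show ?thesis
    using f fstar_SomeD(3)[OF b i f] by (auto simp: estar_def fstar_def)
qed

lemma fstar_estar:
  assumes b: "b \<in> Binf n" and i: "1 \<le> i" "i \<le> n" and e: "estar n i b = Some b'"
  shows "fstar n i b' = Some b"
  using e estar_SomeD(1,4)[OF b i e] by (auto simp: estar_def fstar_def)

lemma estar_iterate_defined_iff:
  assumes b: "b \<in> Binf n" and i: "1 \<le> i" "i \<le> n"
  shows "apply_ops (estar n) (replicate k i) b \<noteq> None \<longleftrightarrow> int k \<le> epsstar n i b"
  using b
proof (induction k arbitrary: b)
  case 0
  then show ?case using epsstar_nonneg[OF _ i(1)] by simp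
next
  case (Suc k)
  show ?case
  proof (cases "estar n i b")
    case None
    then have "\<not> 0 < epsstar n i b" by (simp add: estar_def split: if_splits)
    then show ?thesis using None by simp
  next
    case (Some b')
    then show ?thesis
      using Suc.IH[OF estar_SomeD(2)[OF Suc.prems i Some]] estar_SomeD(3)[OF Suc.prems i Some]
      by (simp; arith)
  qed
qed

lemma Binf_nonzero_epsstar_pos:
  assumes b: "b \<in> Binf n" and nz: "b \<noteq> (\<lambda>s t. 0)"
  shows "\<exists>i\<in>{1..n}. 0 < epsstar n i b"
proof -
  obtain s t where "b s t \<noteq> 0" using nz by (meson ext)
  then have st: "(s, t) \<in> Iset n" "0 < b s t" using b Binf_nonneg[OF b, of s t] by (auto simp: Binf_def)
  have "b (1 + (s - 1)) t \<le> b 1 (t + (s - 1))" by (rule Binf_diagonal_mono[OF b]) simp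
  then have "0 < b 1 (t + (s - 1))" using st by (auto simp: Iset_def)
  then have "\<exists>k. 0 < b 1 k" ..
  define i where "i = (LEAST k. 0 < b 1 k)"
  have b1i: "0 < b 1 i" unfolding i_def by (rule LeastI_ex) fact
  have "(1, i) \<in> Iset n"
    using b1i Binf_vanishes_off_Iset[OF b] unfolding vanishes_off_Iset_def by force
  then have i: "1 \<le> i" "i \<le> n" by (auto simp: Iset_def)
  have "b 1 (i - 1) \<le> 0"
    using not_less_Least[of "i - 1" "\<lambda>k. 0 < b 1 k"] i unfolding i_def[symmetric] by simp
  then have b1i': "b 1 (i - 1) = 0" using Binf_nonneg[OF b, of 1 "i - 1"] by simp
  have "Sigstar n i b 1 = b 1 i - b 1 (i - 1)"
    using Sigstar_telescope[OF Binf_vanishes_off_Iset[OF b], of 1 i] i by simp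
  then have "0 < Sigstar n i b 1" using b1i b1i' by simp
  then have "0 < epsstar n i b" using Sigstar_le_epsstar[of 1 i n b] i by simp
  then show ?thesis using i by auto
qed

lemma Binf_reaches_zero:
  assumes "b \<in> Binf n"
  shows "\<exists>is. set is \<subseteq> {1..n} \<and> apply_ops (estar n) is b = Some (\<lambda>s t. 0)"
  using assms
proof (induction "nat (\<Sum>(s, t)\<in>Iset n. b s t)" arbitrary: b rule: less_induct)
  case less
  show ?case
  proof (cases "b = (\<lambda>s t. 0)")
    case True
    then show ?thesis by (intro exI[of _ "[]"]) simp
  next
    case False
    then obtain i where i: "i \<in> {1..n}" "0 < epsstar n i b"
      using Binf_nonzero_epsstar_pos[OF less.prems] by blast
    then obtain b' where e: "estar n i b = Some b'" by (simp add: estar_def)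
    note b' = estar_SomeD[OF less.prems _ _ e]
    have "0 \<le> (\<Sum>(s, t)\<in>Iset n. b' s t)"
      using Binf_nonneg[OF b'(2)] i by (auto intro: sum_nonneg)
    then obtain "is" where "set is \<subseteq> {1..n}" "apply_ops (estar n) is b' = Some (\<lambda>s t. 0)"
      using less.hyps[OF _ b'(2)] b'(6) i by fastforce
    then show ?thesis using i e by (intro exI[of _ "i # is"]) auto
  qed
qed

lemma crystal_Binf:
  "crystal n (Binf n) (wtB n) (estar n) (fstar n)
     (\<lambda>i b. ereal (of_int (epsstar n i b))) (\<lambda>i b. ereal (of_int (phistar n i b)))"
  unfolding crystal_def
proof (intro conjI ballI)
  fix i b assume i: "i \<in> {1..n}" and b: "b \<in> Binf n"
  then have i': "1 \<le> i" "i \<le> n" by auto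
  have root: "simple_root n i i = 2" using i by (simp add: simple_root_def cartanA_def)
  show "estar n i b = None \<or> the (estar n i b) \<in> Binf n"
    using estar_SomeD(2)[OF b i'] by (cases "estar n i b") auto
  show "fstar n i b = None \<or> the (fstar n i b) \<in> Binf n"
    using fstar_SomeD(1)[OF b i'] by (cases "fstar n i b") auto
  show "\<forall>b'. estar n i b = Some b' \<longrightarrow>
          wtB n b' = (\<lambda>j. wtB n b j + simple_root n i j) \<and>
          ereal (of_int (epsstar n i b')) = ereal (of_int (epsstar n i b)) - 1 \<and>
          ereal (of_int (phistar n i b')) = ereal (of_int (phistar n i b)) + 1"
    using estar_SomeD[OF b i'] root by (auto simp: phistar_def one_ereal_def)
  show "\<forall>b'. fstar n i b = Some b' \<longrightarrow>
          wtB n b' = (\<lambda>j. wtB n b j - simple_root n i j) \<and>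
          ereal (of_int (epsstar n i b')) = ereal (of_int (epsstar n i b)) + 1 \<and>
          ereal (of_int (phistar n i b')) = ereal (of_int (phistar n i b)) - 1"
    using fstar_SomeD[OF b i'] root by (auto simp: phistar_def one_ereal_def)
  fix b' assume "b' \<in> Binf n"
  then show "fstar n i b = Some b' \<longleftrightarrow> estar n i b' = Some b"
    using estar_fstar[OF b i'] fstar_estar[OF _ i'] by blast
qed (auto simp: wtB_def phistar_def)

theorem proposition6p1:
  fixes n :: nat
  assumes "n \<ge> 1"
  shows "highest_weight_crystal n (Binf n) (wtB n) (estar n) (fstar n)
           (\<lambda>i b. ereal (of_int (epsstar n i b))) (\<lambda>i b. ereal (of_int (phistar n i b)))"
  unfolding highest_weight_crystal_def
proof (intro conjI ballI)
  show "\<exists>b0\<in>Binf n. \<forall>b\<in>Binf n. \<exists>is. set is \<subseteq> {1..n} \<and> apply_ops (estar n) is b = Some b0"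
    using zero_in_Binf Binf_reaches_zero by blast
  fix b i assume b: "b \<in> Binf n" and i: "i \<in> {1..n}"
  then have eps: "0 \<le> epsstar n i b" by (simp add: epsstar_nonneg)
  note string = estar_iterate_defined_iff[OF b, of i]
  show "\<exists>m::nat. apply_ops (estar n) (replicate m i) b \<noteq> None \<and>
          (\<forall>k. apply_ops (estar n) (replicate k i) b \<noteq> None \<longrightarrow> k \<le> m) \<and>
          ereal (of_int (epsstar n i b)) = ereal (of_nat m)"
    using i eps string by (intro exI[of _ "nat (epsstar n i b)"]) auto
qed (rule crystal_Binf)

end
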